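(* Let $u$ be the root of $P_{(1,3)}^{(1)}$ and $v$ the root of $P_{(2,1)}^{(2)}$, as described in the context. Then $$t_{\left (P_{(1,3)}^{(1)},u\right )}(\lambda )<t_{\left (P_{(2,1)}^{(2)},v\right )}(\lambda )\quad\mbox{for all }\lambda >2.$$
   Context: For a graph $G$, $\phi_G(\lambda)=\det(\lambda I-A(G))$ denotes its characteristic polynomial, where $A(G)$ is the adjacency matrix. For $\lambda>2$, let $x_1=\frac{\lambda-\sqrt{\lambda^2-4}}{2}$ and $x_2=\frac{\lambda+\sqrt{\lambda^2-4}}{2}$ be the two roots of $x^2-\lambda x+1=0$ (so $x_1+x_2=\lambda$, $x_1x_2=1$, $x_1<1<x_2$). For a rooted graph $(G,v)$ (a graph $G$ with a designated vertex $v$), the functions $p_{(G,v)}$ and $q_{(G,v)}$ are defined by $\phi_G=p_{(G,v)}+q_{(G,v)}$ and $\phi_{G-v}=x_2p_{(G,v)}+x_1q_{(G,v)}$, where $G-v$ is $G$ with vertex $v$ deleted, and $t_{(G,v)}:=q_{(G,v)}/p_{(G,v)}$. The graph $P_{(1,3)}^{(1)}$ is the tree with exactly one vertex of degree $3$ from which three pendent paths of lengths $1$, $1$ and $3$ emanate (6 vertices); its root $u$ is the vertex on the length-$3$ path at distance $2$ from the degree-$3$ vertex (i.e. the neighbour of that path's endpoint). The graph $P_{(2,1)}^{(2)}$ is the tree with exactly one vertex of degree $3$ from which three pendent paths of lengths $2$, $2$ and $1$ emanate (6 vertices); its root $v$ is the endpoint of the length-$1$ path. *)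

theory Defs
  imports "Jordan_Normal_Form.Char_Poly" Complex_Main
begin

definition adj_mat :: "nat \<Rightarrow> (nat \<times> nat) set \<Rightarrow> real mat" where
  "adj_mat n E = mat n n (\<lambda>(i,j). if i \<noteq> j \<and> ((i,j) \<in> E \<or> (j,i) \<in> E) then 1 else 0)"

definition phi :: "real mat \<Rightarrow> real \<Rightarrow> real" where
  "phi A lam = poly (char_poly A) lam"

definition del_vertex :: "real mat \<Rightarrow> nat \<Rightarrow> real mat" where
  "del_vertex A v = mat_delete A v v"

definition x1 :: "real \<Rightarrow> real" where
  "x1 lam = (lam - sqrt (lam\<^sup>2 - 4)) / 2"

definition x2 :: "real \<Rightarrow> real" where
  "x2 lam = (lam + sqrt (lam\<^sup>2 - 4)) / 2"

text \<open>p and q are the unique solution (for lambda > 2, where x1 \<noteq> x2) of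
  phi_G = p + q and phi_{G-v} = x2 p + x1 q.\<close>
definition p_root :: "real mat \<Rightarrow> nat \<Rightarrow> real \<Rightarrow> real" where
  "p_root A v lam = (phi (del_vertex A v) lam - x1 lam * phi A lam) / (x2 lam - x1 lam)"

definition q_root :: "real mat \<Rightarrow> nat \<Rightarrow> real \<Rightarrow> real" where
  "q_root A v lam = (x2 lam * phi A lam - phi (del_vertex A v) lam) / (x2 lam - x1 lam)"

definition t_root :: "real mat \<Rightarrow> nat \<Rightarrow> real \<Rightarrow> real" where
  "t_root A v lam = q_root A v lam / p_root A v lam"

text \<open>P_{(1,3)}^{(1)}: centre 0, pendant paths 0-1, 0-2 and 0-3-4-5; root u = 4.\<close>
definition P13_1 :: "real mat" where
  "P13_1 = adj_mat 6 {(0,1),(0,2),(0,3),(3,4),(4,5)}"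

text \<open>P_{(2,1)}^{(2)}: centre 0, pendant paths 0-1-2, 0-3-4 and 0-5; root v = 5.\<close>
definition P21_2 :: "real mat" where
  "P21_2 = adj_mat 6 {(0,1),(1,2),(0,3),(3,4),(0,5)}"

end

theory Submission imports Defs begin

text \<open>Writing \<open>a = x\<^sub>1\<close>, \<open>b = x\<^sub>2\<close> and \<open>\<lambda> = a + b\<close> with
  \<open>a b = 1\<close>, each \<open>t\<close> becomes an explicit quotient of Laurent polynomials in \<open>b\<close>; the
  cross-multiplied difference of the two quotients factors as
  \<open>(b\<^sup>2 - a\<^sup>2)\<^sup>3 ((b\<^sup>2 + a\<^sup>2)\<^sup>2 - 1)\<close>, which is positive since \<open>0 < a < 1 < b\<close>.\<close>

text \<open>The zero test lets the simplifier skip the minors of vanishing entries, which keeps the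
  symbolic expansion of sparse adjacency matrices small.\<close>

lemma det_mat_laplace_first_column:
  "det (mat n n f) = (if n = 0 then 1 else
     (\<Sum>i<n. if f (i,0) = 0 then 0 else
        f (i,0) * ((-1)^i * det (mat (n-1) (n-1) (\<lambda>(a,b). f (if a < i then a else Suc a, Suc b))))))"
proof (cases "n = 0")
  case True
  thus ?thesis by (simp add: det_dim_zero)
next
  case False
  have "det (mat n n f) = (\<Sum>i<n. mat n n f $$ (i,0) * cofactor (mat n n f) i 0)"
    by (rule laplace_expansion_column) (use False in auto)
  also have "\<dots> = (\<Sum>i<n. if f (i,0) = 0 then 0 else
        f (i,0) * ((-1)^i * det (mat (n-1) (n-1) (\<lambda>(a,b). f (if a < i then a else Suc a, Suc b)))))"
  proof (rule sum.cong[OF refl])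
    fix i assume i: "i \<in> {..<n}"
    have "mat_delete (mat n n f) i 0 = mat (n-1) (n-1) (\<lambda>(a,b). f (if a < i then a else Suc a, Suc b))"
      by (rule eq_matI) (use i False in \<open>auto simp: mat_delete_def\<close>)
    thus "mat n n f $$ (i,0) * cofactor (mat n n f) i 0 = (if f (i,0) = 0 then 0 else
        f (i,0) * ((-1)^i * det (mat (n-1) (n-1) (\<lambda>(a,b). f (if a < i then a else Suc a, Suc b)))))"
      using i False by (simp add: cofactor_def)
  qed
  finally show ?thesis using False by simp
qed

lemma phi_mat:
  "phi (mat n n f) lam =
   poly (det (mat n n (\<lambda>(i,j). (if i = j then [:0,1:] else 0) + [: - f (i,j) :]))) lam"
proof -
  have "char_poly_matrix (mat n n f) = mat n n (\<lambda>(i,j). (if i = j then [:0,1:] else 0) + [: - f (i,j) :])"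
    by (rule eq_matI) (auto simp: char_poly_matrix_def)
  thus ?thesis
    unfolding phi_def char_poly_def by simp
qed

lemma del_vertex_mat:
  "v < n \<Longrightarrow> del_vertex (mat n n f) v =
     mat (n-1) (n-1) (\<lambda>(i,j). f (if i < v then i else Suc i, if j < v then j else Suc j))"
  unfolding del_vertex_def by (rule eq_matI) (auto simp: mat_delete_def)

lemma phi_P13_1: "phi P13_1 lam = lam^6 - 5*lam^4 + 5*lam^2"
  unfolding P13_1_def adj_mat_def phi_mat
  by (simp add: numeral_eq_Suc lessThan_Suc det_mat_laplace_first_column)
     (simp add: algebra_simps)

lemma phi_del_P13_1: "phi (del_vertex P13_1 4) lam = lam^5 - 3*lam^3"
  unfolding P13_1_def adj_mat_def del_vertex_mat[of 4 6, simplified] phi_mat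
  by (simp add: numeral_eq_Suc lessThan_Suc det_mat_laplace_first_column)
     (simp add: algebra_simps)

lemma phi_P21_2: "phi P21_2 lam = lam^6 - 5*lam^4 + 5*lam^2 - 1"
  unfolding P21_2_def adj_mat_def phi_mat
  by (simp add: numeral_eq_Suc lessThan_Suc det_mat_laplace_first_column)
     (simp add: algebra_simps)

lemma phi_del_P21_2: "phi (del_vertex P21_2 5) lam = lam^5 - 4*lam^3 + 3*lam"
  unfolding P21_2_def adj_mat_def del_vertex_mat[of 5 6, simplified] phi_mat
  by (simp add: numeral_eq_Suc lessThan_Suc det_mat_laplace_first_column)
     (simp add: algebra_simps)

lemma x1_x2_basic:
  assumes "lam > 2"
  shows "x1 lam * x2 lam = 1" "x1 lam + x2 lam = lam" "x2 lam > 1" "0 < x1 lam" "x1 lam < 1"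
proof -
  define s where "s = sqrt (lam\<^sup>2 - 4)"
  have "lam\<^sup>2 > 2\<^sup>2"
    by (rule power_strict_mono) (use assms in auto)
  hence s_pos: "s > 0" and s_sq: "s\<^sup>2 = lam\<^sup>2 - 4"
    unfolding s_def by simp_all
  show prod: "x1 lam * x2 lam = 1"
    unfolding x1_def x2_def s_def[symmetric] using s_sq by (simp add: field_simps power2_eq_square)
  show "x1 lam + x2 lam = lam"
    unfolding x1_def x2_def by (simp add: field_simps)
  show b_gt: "x2 lam > 1"
    unfolding x2_def s_def[symmetric] using s_pos assms by simp
  have "x1 lam = 1 / x2 lam"
    using prod b_gt by (auto simp: field_simps)
  thus "0 < x1 lam" "x1 lam < 1"
    using b_gt by simp_all
qed

lemma t_root_eq:
  assumes "lam > 2"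
  shows "t_root A v lam =
    (x2 lam * phi A lam - phi (del_vertex A v) lam) / (phi (del_vertex A v) lam - x1 lam * phi A lam)"
proof -
  have "x2 lam - x1 lam \<noteq> 0"
    using x1_x2_basic[OF assms] by simp
  thus ?thesis
    unfolding t_root_def p_root_def q_root_def by simp
qed

lemma t_root_P13_1:
  assumes lam: "lam > 2"
  defines "a \<equiv> x1 lam" and "b \<equiv> x2 lam"
  shows "t_root P13_1 4 lam = (b^7 - 2*b^3 - b - a - a^3) / (b^3 + b + a + 2*a^3 - a^7)"
proof -
  have "a * b = 1" "lam = a + b"
    using x1_x2_basic[OF lam] unfolding a_def b_def by simp_all
  thus ?thesis
    unfolding t_root_eq[OF lam] phi_P13_1 phi_del_P13_1 a_def[symmetric] b_def[symmetric]
    by (intro arg_cong2[where f = "(/)"]) Groebner_Basis.algebra+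
qed

lemma t_root_P21_2:
  assumes lam: "lam > 2"
  defines "a \<equiv> x1 lam" and "b \<equiv> x2 lam"
  shows "t_root P21_2 5 lam = (b^7 - b^3 - 2*b - a) / (b + 2*a + a^3 - a^7)"
proof -
  have "a * b = 1" "lam = a + b"
    using x1_x2_basic[OF lam] unfolding a_def b_def by simp_all
  thus ?thesis
    unfolding t_root_eq[OF lam] phi_P21_2 phi_del_P21_2 a_def[symmetric] b_def[symmetric]
    by (intro arg_cong2[where f = "(/)"]) Groebner_Basis.algebra+
qed

lemma t_quotients_less:
  fixes a b :: real
  assumes ab: "a * b = 1" and a_pos: "0 < a" and a_lt: "a < 1" and b_gt: "1 < b"
  shows "(b^7 - 2*b^3 - b - a - a^3) / (b^3 + b + a + 2*a^3 - a^7)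
         < (b^7 - b^3 - 2*b - a) / (b + 2*a + a^3 - a^7)"
proof -
  have "a^7 \<le> a"
    using power_decreasing[of 1 7 a] a_pos a_lt by simp
  moreover have "0 < a^3" "0 < b^3"
    using a_pos b_gt by simp_all
  ultimately have den1: "b^3 + b + a + 2*a^3 - a^7 > 0" and den2: "b + 2*a + a^3 - a^7 > 0"
    using a_pos b_gt by linarith+
  have "a^2 < b^2"
    using a_pos a_lt b_gt by (intro power_strict_mono) auto
  moreover have "1 < b^2" "0 < a^2"
    using a_pos b_gt by simp_all
  hence "1 < b^2 + a^2"
    by linarith
  hence "(b^2 + a^2)^2 > 1"
    by simp
  ultimately have "(b^2 - a^2)^3 * ((b^2 + a^2)^2 - 1) > 0"
    by simp
  also have "(b^2 - a^2)^3 * ((b^2 + a^2)^2 - 1)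
      = (b^7 - b^3 - 2*b - a) * (b^3 + b + a + 2*a^3 - a^7)
        - (b^7 - 2*b^3 - b - a - a^3) * (b + 2*a + a^3 - a^7)"
    using ab by Groebner_Basis.algebra
  finally show ?thesis
    using den1 den2 by (simp add: divide_less_eq less_divide_eq mult.commute)
qed

theorem lemma2p9:
  fixes lam :: real
  assumes "lam > 2"
  shows "t_root P13_1 4 lam < t_root P21_2 5 lam"
  unfolding t_root_P13_1[OF assms] t_root_P21_2[OF assms]
  using x1_x2_basic[OF assms] by (intro t_quotients_less)

end
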